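(* Let each $f_i:\mathbb{R}^d\to\mathbb{R}$ be $L_i$-smooth (not necessarily convex), $R=0$, and suppose $f^{\inf}=\inf_{x\in\mathbb{R}^d}f(x)>-\infty$. In EF-BV, suppose $\nu\in(0,1]$, $\lambda\in(0,1]$ is such that $r<1$, and $$0<\gamma\le\frac{1}{L+\tilde L\sqrt{\frac{r_{\mathrm{av}}}{r}}\frac1s}.$$ For every $t\ge1$, let $\hat x^t$ be chosen uniformly at random among $x^0,x^1,\dots,x^{t-1}$. Then $$\mathbb{E}\big[\|\nabla f(\hat x^t)\|^2\big]\le\frac{2\big(f(x^0)-f^{\inf}\big)}{\gamma t}+\frac{G^0}{\theta t},$$ where $G^0=\frac1n\sum_{i=1}^n\|\nabla f_i(x^0)-h_i^0\|^2$.
   Context: $f=\frac1n\sum_{i=1}^nf_i$ with each $f_i$ differentiable with $L_i$-Lipschitz gradient; $\tilde L=\sqrt{\frac1n\sum_iL_i^2}$ and $f$ is $L$-smooth with $L\le\tilde L$. For $\eta\in[0,1)$, $\omega\ge0$, $\mathbb{C}(\eta,\omega)$ is the class of randomized operators $\mathcal{C}:\mathbb{R}^d\to\mathbb{R}^d$ with $\|\mathbb{E}[\mathcal{C}(x)]-x\|\le\eta\|x\|$ and $\mathbb{E}\|\mathcal{C}(x)-\mathbb{E}[\mathcal{C}(x)]\|^2\le\omega\|x\|^2$ for all $x$. Compressors $\mathcal{C}_i^t$ ($i=1,\dots,n$, $t\ge0$) all lie in $\mathbb{C}(\eta,\omega)$; those used at iteration $t$ are independent of all randomness of previous iterations; $\omega_{\mathrm{av}}\in[0,\omega]$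 satisfies, for every $t$ and all $x_1,\dots,x_n$, $\mathbb{E}\|\frac1n\sum_i(\mathcal{C}_i^t(x_i)-\mathbb{E}[\mathcal{C}_i^t(x_i)])\|^2\le\frac{\omega_{\mathrm{av}}}{n}\sum_i\|x_i\|^2$. Algorithm EF-BV (with $R=0$): given $x^0,h_1^0,\dots,h_n^0$, $\gamma>0$, $\lambda,\nu\in(0,1]$, $h^0=\frac1n\sum_ih_i^0$; for $t\ge0$: $d_i^t=\mathcal{C}_i^t(\nabla f_i(x^t)-h_i^t)$, $h_i^{t+1}=h_i^t+\lambda d_i^t$, $d^t=\frac1n\sum_id_i^t$, $h^{t+1}=h^t+\lambda d^t$, $g^{t+1}=h^t+\nu d^t$, $x^{t+1}=x^t-\gamma g^{t+1}$. Constants: $r=(1-\lambda+\lambda\eta)^2+\lambda^2\omega$, $r_{\mathrm{av}}=(1-\nu+\nu\eta)^2+\nu^2\omega_{\mathrm{av}}$, $s=\frac{1}{\sqrt r}-1$, $\theta=s(1+s)\frac{r}{r_{\mathrm{av}}}$ (with $r>0$, $r_{\mathrm{av}}>0$). *)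

theory Defs
  imports "HOL-Probability.Probability"
begin

text \<open>EF-BV with R = 0.  Indices i range over {..<n} (i.e. 0..n-1 instead of 1..n).
  The randomness of iteration t is a seed w t drawn from the probability space P t;
  the whole run is driven by a seed sequence w :: nat => 'w, distributed according
  to the product measure PiM UNIV P (so seeds of different iterations are independent).
  The compressor C_i^t is the random operator C i t (w t).
  State after t steps: (x^t, (h_i^t)_i, h^t).\<close>

fun efbv_state ::
  "(nat \<Rightarrow> nat \<Rightarrow> 'w \<Rightarrow> real^'d \<Rightarrow> real^'d) \<Rightarrow> (nat \<Rightarrow> real^'d \<Rightarrow> real^'d) \<Rightarrow> nat \<Rightarrow>
   real \<Rightarrow> real \<Rightarrow> real \<Rightarrow> real^'d \<Rightarrow> (nat \<Rightarrow> real^'d) \<Rightarrow> (nat \<Rightarrow> 'w) \<Rightarrow> nat \<Rightarrow>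
   (real^'d) \<times> (nat \<Rightarrow> real^'d) \<times> (real^'d)"
where
  "efbv_state C gf n gamma lam nu x0 h0 w 0 = (x0, h0, (1 / real n) *\<^sub>R (\<Sum>i<n. h0 i))"
| "efbv_state C gf n gamma lam nu x0 h0 w (Suc t) =
     (let (x, hi, h) = efbv_state C gf n gamma lam nu x0 h0 w t;
          d = (\<lambda>i. C i t (w t) (gf i x - hi i));
          dbar = (1 / real n) *\<^sub>R (\<Sum>i<n. d i);
          g = h + nu *\<^sub>R dbar
      in (x - gamma *\<^sub>R g, (\<lambda>i. hi i + lam *\<^sub>R d i), h + lam *\<^sub>R dbar))"

definition efbv_x where
  "efbv_x C gf n gamma lam nu x0 h0 w t = fst (efbv_state C gf n gamma lam nu x0 h0 w t)"

definition ef_r :: "real \<Rightarrow> real \<Rightarrow> real \<Rightarrow> real" where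
  "ef_r eta om lam = (1 - lam + lam * eta)^2 + lam^2 * om"

definition ef_s :: "real \<Rightarrow> real" where
  "ef_s r = 1 / sqrt r - 1"

definition ef_theta :: "real \<Rightarrow> real \<Rightarrow> real" where
  "ef_theta r r_av = ef_s r * (1 + ef_s r) * (r / r_av)"

end

theory Submission
  imports Defs
begin

text \<open>
  A Lyapunov argument. With G = (1/n) sum_i ||grad f_i(x) - h_i||^2 and the potential
  Psi = f(x) - f_inf + gamma/(2 theta) G, one iteration satisfies E Psi' + gamma/2 ||grad f(x)||^2 <= Psi.
  The descent lemma for f bounds f(x') in terms of ||g - grad f(x)||^2, whose expectation is at most r_av G by
  the bias-variance decomposition of the averaged compressors. Young's inequality with parameter s and the
  Lipschitz gradients bound G' by a multiple of ||g||^2 plus (1 + s) times the control-variate error, whose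
  expectation is at most (1 + s) r G. Since s = 1/sqrt r - 1 means (1 + s)^2 r = 1, the step-size condition
  absorbs both the ||g||^2 terms and the G terms. Telescoping under the product measure of the seeds and averaging
  over the random index gives the bound.
\<close>

abbreviation vmean :: "nat \<Rightarrow> (nat \<Rightarrow> 'a::real_vector) \<Rightarrow> 'a" where
  "vmean n v \<equiv> (1 / real n) *\<^sub>R (\<Sum>i<n. v i)"

abbreviation mean_sq :: "nat \<Rightarrow> (nat \<Rightarrow> 'a::real_normed_vector) \<Rightarrow> real" where
  "mean_sq n v \<equiv> (1 / real n) * (\<Sum>i<n. (norm (v i))^2)"

lemma norm_add_sq:
  fixes a b :: "'a::real_inner"
  shows "(norm (a + b))^2 = (norm a)^2 + 2 * (a \<bullet> b) + (norm b)^2"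
  by (simp add: power2_norm_eq_inner inner_add_left inner_add_right inner_commute)

lemma norm_vmean_sq_le:
  fixes v :: "nat \<Rightarrow> 'a::real_normed_vector"
  assumes "n \<ge> 1"
  shows "(norm (vmean n v))^2 \<le> mean_sq n v"
proof -
  have "norm (vmean n v) \<le> (1 / real n) * (\<Sum>i<n. norm (v i))"
    by (simp add: divide_right_mono norm_sum)
  then have "(norm (vmean n v))^2 \<le> ((1 / real n) * (\<Sum>i<n. 1 * norm (v i)))^2"
    by (simp add: power_mono)
  also have "\<dots> \<le> (1 / real n)^2 * ((\<Sum>i<n. 1^2) * (\<Sum>i<n. (norm (v i))^2))"
    unfolding power_mult_distrib by (intro mult_left_mono Cauchy_Schwarz_ineq_sum) auto
  also have "\<dots> = mean_sq n v"
    using assms by (simp add: power2_eq_square)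
  finally show ?thesis .
qed

lemma norm_add_sq_le_weighted:
  fixes a b :: "'a::real_inner"
  assumes "s > 0"
  shows "(norm (a + b))^2 \<le> (1 + 1/s) * (norm a)^2 + (1 + s) * (norm b)^2"
proof -
  have "2 * (a \<bullet> b) \<le> 2 * (norm a * norm b)"
    using norm_cauchy_schwarz by simp
  also have "\<dots> \<le> (norm a)^2 / s + s * (norm b)^2"
    using assms sum_squares_bound[of "norm a / sqrt s" "sqrt s * norm b"]
    by (simp add: power_mult_distrib power_divide)
  finally have "2 * (a \<bullet> b) \<le> (norm a)^2 / s + s * (norm b)^2" .
  moreover have "(1 + 1/s) * (norm a)^2 = (norm a)^2 + (norm a)^2 / s"
    by (simp add: distrib_right)
  ultimately show ?thesis
    unfolding norm_add_sq by (simp add: algebra_simps)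
qed

lemma norm_scaleR_sub_le:
  fixes m v :: "'a::real_normed_vector"
  assumes "norm (m - v) \<le> eta * norm v" and "0 \<le> lam" and "lam \<le> 1"
  shows "norm (lam *\<^sub>R m - v) \<le> (1 - lam + lam * eta) * norm v"
proof -
  have "norm (lam *\<^sub>R m - v) = norm (lam *\<^sub>R (m - v) - (1 - lam) *\<^sub>R v)"
    by (simp add: algebra_simps)
  also have "\<dots> \<le> lam * norm (m - v) + (1 - lam) * norm v"
    using assms(2,3) by (metis norm_triangle_ineq4 norm_scaleR abs_of_nonneg diff_ge_0_iff_ge)
  also have "\<dots> \<le> lam * (eta * norm v) + (1 - lam) * norm v"
    using assms by (intro add_right_mono mult_left_mono) auto
  finally show ?thesis by (simp add: algebra_simps)
qed

lemma (in prob_space)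
  fixes Y :: "'a \<Rightarrow> 'b::euclidean_space"
  assumes Y: "integrable M Y"
    and var: "integrable M (\<lambda>\<xi>. (norm (Y \<xi> - expectation Y))^2)"
  shows integrable_norm_scaleR_sub_sq: "integrable M (\<lambda>\<xi>. (norm (c *\<^sub>R Y \<xi> - a))^2)"
    and expectation_norm_scaleR_sub_sq: "expectation (\<lambda>\<xi>. (norm (c *\<^sub>R Y \<xi> - a))^2)
      = (norm (c *\<^sub>R expectation Y - a))^2 + c^2 * expectation (\<lambda>\<xi>. (norm (Y \<xi> - expectation Y))^2)"
proof -
  define m where "m = expectation Y"
  have split: "(norm (c *\<^sub>R Y \<xi> - a))^2
      = c^2 * (norm (Y \<xi> - m))^2 + 2 * ((c *\<^sub>R (Y \<xi> - m)) \<bullet> (c *\<^sub>R m - a)) + (norm (c *\<^sub>R m - a))^2"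
    for \<xi>
  proof -
    have "c *\<^sub>R Y \<xi> - a = c *\<^sub>R (Y \<xi> - m) + (c *\<^sub>R m - a)" by (simp add: algebra_simps)
    then show ?thesis by (simp only: norm_add_sq) (simp add: power_mult_distrib)
  qed
  have cross: "integrable M (\<lambda>\<xi>. 2 * ((c *\<^sub>R (Y \<xi> - m)) \<bullet> (c *\<^sub>R m - a)))"
    using Y by (intro integrable_mult_right integrable_inner_left) auto
  have centred: "expectation (\<lambda>\<xi>. (c *\<^sub>R (Y \<xi> - m)) \<bullet> (c *\<^sub>R m - a)) = 0"
    using Y by (simp add: integral_inner_left m_def prob_space)
  have var': "integrable M (\<lambda>\<xi>. c^2 * (norm (Y \<xi> - m))^2)"
    using var by (simp add: m_def)
  show "integrable M (\<lambda>\<xi>. (norm (c *\<^sub>R Y \<xi> - a))^2)"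
    unfolding split using var' cross by auto
  show "expectation (\<lambda>\<xi>. (norm (c *\<^sub>R Y \<xi> - a))^2)
      = (norm (c *\<^sub>R expectation Y - a))^2 + c^2 * expectation (\<lambda>\<xi>. (norm (Y \<xi> - expectation Y))^2)"
    unfolding split using var' cross centred by (simp add: prob_space m_def)
qed

lemma lipschitz_gradient_upper_bound:
  fixes F :: "'a::real_inner \<Rightarrow> real"
  assumes grad: "\<And>x. GDERIV F x :> gF x"
    and lip: "\<And>x y. norm (gF x - gF y) \<le> L * norm (x - y)"
  shows "F y \<le> F x + gF x \<bullet> (y - x) + L/2 * (norm (y - x))^2"
proof -
  define v where "v = y - x"
  define \<psi> where "\<psi> \<tau> = F (x + \<tau> *\<^sub>R v) - \<tau> * (gF x \<bullet> v) - L/2 * \<tau>^2 * (norm v)^2" for \<tau> :: real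
  have dF: "((\<lambda>\<tau>. F (x + \<tau> *\<^sub>R v)) has_real_derivative (gF (x + \<tau> *\<^sub>R v) \<bullet> v)) (at \<tau>)" for \<tau>
  proof -
    have "((\<lambda>\<tau>. x + \<tau> *\<^sub>R v) has_derivative (\<lambda>h. h *\<^sub>R v)) (at \<tau>)"
      by (auto intro!: derivative_eq_intros)
    moreover have "(F has_derivative (\<lambda>h. h \<bullet> gF (x + \<tau> *\<^sub>R v))) (at (x + \<tau> *\<^sub>R v))"
      using grad unfolding gderiv_def by blast
    ultimately have "((\<lambda>\<tau>. F (x + \<tau> *\<^sub>R v)) has_derivative (\<lambda>h. (h *\<^sub>R v) \<bullet> gF (x + \<tau> *\<^sub>R v))) (at \<tau>)"
      by (rule has_derivative_compose)
    moreover have "(\<lambda>h. (h *\<^sub>R v) \<bullet> gF (x + \<tau> *\<^sub>R v)) = (*) (gF (x + \<tau> *\<^sub>R v) \<bullet> v)"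
      by (auto simp: fun_eq_iff inner_commute)
    ultimately show ?thesis
      unfolding has_field_derivative_def by simp
  qed
  have d\<psi>: "(\<psi> has_real_derivative (gF (x + \<tau> *\<^sub>R v) - gF x) \<bullet> v - L * \<tau> * (norm v)^2) (at \<tau>)" for \<tau>
    unfolding \<psi>_def
    by (rule DERIV_diff[OF DERIV_diff[OF dF], THEN DERIV_cong])
      (auto intro!: derivative_eq_intros simp: power2_eq_square inner_diff_left)
  have nonpos: "(gF (x + \<tau> *\<^sub>R v) - gF x) \<bullet> v - L * \<tau> * (norm v)^2 \<le> 0" if "0 \<le> \<tau>" for \<tau>
  proof -
    have "(gF (x + \<tau> *\<^sub>R v) - gF x) \<bullet> v \<le> norm (gF (x + \<tau> *\<^sub>R v) - gF x) * norm v"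
      by (rule norm_cauchy_schwarz)
    also have "\<dots> \<le> (L * norm (\<tau> *\<^sub>R v)) * norm v"
      using lip[of "x + \<tau> *\<^sub>R v" x] by (intro mult_right_mono) auto
    finally show ?thesis using that by (simp add: power2_eq_square)
  qed
  have "\<psi> 1 \<le> \<psi> 0"
  proof (rule DERIV_nonpos_imp_nonincreasing[of 0 1])
    fix \<tau> :: real
    assume "0 \<le> \<tau>" "\<tau> \<le> 1"
    then show "\<exists>y. (\<psi> has_real_derivative y) (at \<tau>) \<and> y \<le> 0"
      using d\<psi> nonpos by blast
  qed simp
  then show ?thesis by (simp add: \<psi>_def v_def)
qed

lemma gradient_step_upper_bound:
  fixes F :: "'a::real_inner \<Rightarrow> real"
  assumes upper: "\<And>y. F y \<le> F x + gF x \<bullet> (y - x) + L/2 * (norm (y - x))^2"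
  shows "F (x - gamma *\<^sub>R g) \<le> F x - gamma/2 * (norm (gF x))^2
           - gamma/2 * (1 - L * gamma) * (norm g)^2 + gamma/2 * (norm (g - gF x))^2"
proof -
  have "F (x - gamma *\<^sub>R g) \<le> F x - gamma * (gF x \<bullet> g) + L * gamma^2 / 2 * (norm g)^2"
    using upper[of "x - gamma *\<^sub>R g"] by (simp add: power_mult_distrib)
  moreover have "gamma/2 * (norm (g - gF x))^2
      = gamma/2 * (norm g)^2 - gamma * (gF x \<bullet> g) + gamma/2 * (norm (gF x))^2"
  proof -
    have "(norm (g - gF x))^2 = (norm g)^2 - 2 * (gF x \<bullet> g) + (norm (gF x))^2"
      using norm_add_sq[of g "- gF x"] by (simp add: inner_commute)
    then show ?thesis by (simp only:) (simp add: algebra_simps)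
  qed
  moreover have "gamma/2 * (1 - L * gamma) * (norm g)^2 = gamma/2 * (norm g)^2 - L * gamma^2 / 2 * (norm g)^2"
    by (simp add: field_simps power2_eq_square)
  ultimately show ?thesis by linarith
qed

lemma gderiv_mean:
  fixes f :: "nat \<Rightarrow> 'a::real_inner \<Rightarrow> real"
  assumes "\<And>i. i < n \<Longrightarrow> GDERIV (f i) x :> gf i x"
    and "F = (\<lambda>x. (1 / real n) * (\<Sum>i<n. f i x))"
    and "GDERIV F x :> gF x"
  shows "gF x = vmean n (\<lambda>i. gf i x)"
proof -
  have "((\<lambda>x. \<Sum>i<n. f i x) has_derivative (\<lambda>h. \<Sum>i<n. h \<bullet> gf i x)) (at x)"
    using assms(1) unfolding gderiv_def by (intro has_derivative_sum) auto
  then have "(F has_derivative (\<lambda>h. (1 / real n) * (\<Sum>i<n. h \<bullet> gf i x))) (at x)"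
    unfolding assms(2) by (rule has_derivative_mult_right)
  also have "(\<lambda>h. (1 / real n) * (\<Sum>i<n. h \<bullet> gf i x)) = (\<lambda>h. h \<bullet> vmean n (\<lambda>i. gf i x))"
    by (simp add: fun_eq_iff inner_sum_right)
  finally have "(F has_derivative (\<lambda>h. h \<bullet> vmean n (\<lambda>i. gf i x))) (at x)" .
  moreover have "(F has_derivative (\<lambda>h. h \<bullet> gF x)) (at x)"
    using assms(3) unfolding gderiv_def .
  ultimately have "(\<lambda>h. h \<bullet> vmean n (\<lambda>i. gf i x)) = (\<lambda>h. h \<bullet> gF x)"
    by (rule has_derivative_unique)
  then show ?thesis
    by (metis inner_commute vector_eq)
qed

lemma stepsize_sq_le:
  fixes gamma L B :: real
  assumes "0 < gamma" "0 \<le> L" "0 \<le> B" and "gamma \<le> 1 / (L + B)"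
  shows "(gamma * B)^2 \<le> 1 - L * gamma"
proof -
  have "gamma * (L + B) \<le> 1"
  proof (cases "L + B = 0")
    case False
    then show ?thesis
      using assms by (simp add: pos_le_divide_eq mult.commute)
  qed simp
  then have gamma_B: "gamma * B \<le> 1 - L * gamma"
    by (simp add: algebra_simps)
  moreover have "0 \<le> L * gamma"
    using assms by simp
  ultimately have "gamma * B \<le> 1"
    by linarith
  then have "(gamma * B) * (gamma * B) \<le> gamma * B"
    using assms by (intro mult_left_le) auto
  with gamma_B show ?thesis
    by (simp add: power2_eq_square)
qed

lemma efbv_stepsize_conditions:
  fixes r r_av gamma L L2 :: real
  defines "s \<equiv> ef_s r" and "K \<equiv> gamma / (2 * ef_theta r r_av)"
  assumes r: "0 < r" "r < 1" and r_av: "0 < r_av" and gamma: "0 < gamma"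
    and L: "0 \<le> L" and L2: "0 \<le> L2"
    and gamma_le: "gamma \<le> 1 / (L + sqrt L2 * sqrt (r_av / r) * (1 / s))"
  shows "0 < s" and "0 < K"
    and "K * (1 + s) * r + gamma/2 * r_av \<le> K"
    and "K * (1 + 1/s) * L2 * gamma^2 \<le> gamma/2 * (1 - L * gamma)"
proof -
  have one_plus_s: "1 + s = 1 / sqrt r"
    by (simp add: s_def ef_s_def)
  moreover have "1 < 1 / sqrt r"
    using r by (simp add: less_divide_eq_1)
  ultimately show s_pos: "0 < s"
    by simp
  \<comment> \<open>the choice of s is exactly the identity (1 + s)^2 r = 1\<close>
  have r_eq: "r = 1 / (1 + s)^2"
    using r by (simp add: one_plus_s power_divide)
  have "K = gamma * r_av / (2 * s * (1 + s) * r)"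
    by (simp add: K_def ef_theta_def s_def)
  also have "\<dots> = gamma * r_av * (1 + s) / (2 * s)"
    using s_pos by (simp add: r_eq power2_eq_square)
  finally have K_eq: "K = gamma * r_av * (1 + s) / (2 * s)" .
  show "0 < K"
    using s_pos r_av gamma by (simp add: K_eq)
  have "K * (1 + s) * r = gamma * r_av / (2 * s)"
    using s_pos by (simp add: K_eq r_eq power2_eq_square)
  then show "K * (1 + s) * r + gamma/2 * r_av \<le> K"
    using s_pos by (simp add: K_eq field_simps)
  define B where "B = sqrt L2 * sqrt (r_av / r) * (1 / s)"
  have "0 \<le> B"
    using s_pos L2 r r_av by (simp add: B_def)
  then have "(gamma * B)^2 \<le> 1 - L * gamma"
    using gamma L gamma_le by (intro stepsize_sq_le) (simp_all add: B_def)
  moreover have "K * (1 + 1/s) * L2 * gamma^2 = gamma/2 * (gamma * B)^2"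
    using s_pos r L2 r_av unfolding K_eq B_def
    by (simp add: power_mult_distrib power_divide r_eq field_simps power2_eq_square)
  ultimately show "K * (1 + 1/s) * L2 * gamma^2 \<le> gamma/2 * (1 - L * gamma)"
    using gamma by (simp add: mult_left_mono)
qed

section \<open>Compressors\<close>

text \<open>One round of compression: each C i is in the class C(eta, om) of the paper, and om_av bounds the
  variance of their average.\<close>

locale compression_round = prob_space M for M :: "'w measure" +
  fixes n :: nat and C :: "nat \<Rightarrow> 'w \<Rightarrow> 'a::euclidean_space \<Rightarrow> 'a" and eta om om_av :: real
  assumes n_pos: "n \<ge> 1"
    and integrable_C: "\<And>i x. i < n \<Longrightarrow> integrable M (\<lambda>\<xi>. C i \<xi> x)"
    and bias_C: "\<And>i x. i < n \<Longrightarrow> norm (expectation (\<lambda>\<xi>. C i \<xi> x) - x) \<le> eta * norm x"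
    and integrable_variance_C: "\<And>i x. i < n \<Longrightarrow>
      integrable M (\<lambda>\<xi>. (norm (C i \<xi> x - expectation (\<lambda>\<xi>'. C i \<xi>' x)))^2)"
    and variance_C: "\<And>i x. i < n \<Longrightarrow>
      expectation (\<lambda>\<xi>. (norm (C i \<xi> x - expectation (\<lambda>\<xi>'. C i \<xi>' x)))^2) \<le> om * (norm x)^2"
    and variance_vmean_C: "\<And>xs. expectation (\<lambda>\<xi>.
      (norm (vmean n (\<lambda>i. C i \<xi> (xs i) - expectation (\<lambda>\<xi>'. C i \<xi>' (xs i)))))^2) \<le> om_av * mean_sq n xs"
begin

lemma
  assumes i: "i < n" and lam: "0 \<le> lam" "lam \<le> 1"
  shows integrable_control_error: "integrable M (\<lambda>\<xi>. (norm (lam *\<^sub>R C i \<xi> v - v))^2)"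
    and expectation_control_error:
      "expectation (\<lambda>\<xi>. (norm (lam *\<^sub>R C i \<xi> v - v))^2) \<le> ef_r eta om lam * (norm v)^2"
proof -
  note Y = integrable_C[OF i] integrable_variance_C[OF i]
  show "integrable M (\<lambda>\<xi>. (norm (lam *\<^sub>R C i \<xi> v - v))^2)"
    using integrable_norm_scaleR_sub_sq[OF Y] .
  have "norm (lam *\<^sub>R expectation (\<lambda>\<xi>. C i \<xi> v) - v) \<le> (1 - lam + lam * eta) * norm v"
    using bias_C[OF i] lam by (rule norm_scaleR_sub_le)
  then have "(norm (lam *\<^sub>R expectation (\<lambda>\<xi>. C i \<xi> v) - v))^2 \<le> (1 - lam + lam * eta)^2 * (norm v)^2"
    by (metis norm_ge_zero power_mono power_mult_distrib)
  moreover have "lam^2 * expectation (\<lambda>\<xi>. (norm (C i \<xi> v - expectation (\<lambda>\<xi>'. C i \<xi>' v)))^2)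
      \<le> lam^2 * (om * (norm v)^2)"
    using variance_C[OF i] by (intro mult_left_mono) auto
  ultimately show "expectation (\<lambda>\<xi>. (norm (lam *\<^sub>R C i \<xi> v - v))^2) \<le> ef_r eta om lam * (norm v)^2"
    unfolding expectation_norm_scaleR_sub_sq[OF Y] ef_r_def by (simp add: algebra_simps)
qed

lemma integrable_variance_vmean:
  "integrable M (\<lambda>\<xi>. (norm (vmean n (\<lambda>i. C i \<xi> (v i) - expectation (\<lambda>\<xi>'. C i \<xi>' (v i)))))^2)"
proof (rule Bochner_Integration.integrable_bound)
  show "integrable M (\<lambda>\<xi>. mean_sq n (\<lambda>i. C i \<xi> (v i) - expectation (\<lambda>\<xi>'. C i \<xi>' (v i))))"
    by (intro integrable_mult_right Bochner_Integration.integrable_sum integrable_variance_C) auto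
  have "(\<lambda>\<xi>. C i \<xi> x) \<in> borel_measurable M" if "i < n" for i x
    using integrable_C[OF that] by (rule borel_measurable_integrable)
  then show "(\<lambda>\<xi>. (norm (vmean n (\<lambda>i. C i \<xi> (v i) - expectation (\<lambda>\<xi>'. C i \<xi>' (v i)))))^2) \<in> borel_measurable M"
    by measurable
  show "AE \<xi> in M. norm ((norm (vmean n (\<lambda>i. C i \<xi> (v i) - expectation (\<lambda>\<xi>'. C i \<xi>' (v i)))))^2)
      \<le> norm (mean_sq n (\<lambda>i. C i \<xi> (v i) - expectation (\<lambda>\<xi>'. C i \<xi>' (v i))))"
  proof (rule AE_I2)
    fix \<xi>
    show "norm ((norm (vmean n (\<lambda>i. C i \<xi> (v i) - expectation (\<lambda>\<xi>'. C i \<xi>' (v i)))))^2)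
        \<le> norm (mean_sq n (\<lambda>i. C i \<xi> (v i) - expectation (\<lambda>\<xi>'. C i \<xi>' (v i))))"
      using norm_vmean_sq_le[OF n_pos, of "\<lambda>i. C i \<xi> (v i) - expectation (\<lambda>\<xi>'. C i \<xi>' (v i))"]
      by (simp add: sum_nonneg)
  qed
qed

lemma
  assumes lam: "0 \<le> lam" "lam \<le> 1"
  shows integrable_mean_sq_control_error: "integrable M (\<lambda>\<xi>. mean_sq n (\<lambda>i. lam *\<^sub>R C i \<xi> (v i) - v i))"
    and expectation_mean_sq_control_error:
      "expectation (\<lambda>\<xi>. mean_sq n (\<lambda>i. lam *\<^sub>R C i \<xi> (v i) - v i)) \<le> ef_r eta om lam * mean_sq n v"
proof -
  have int: "integrable M (\<lambda>\<xi>. (norm (lam *\<^sub>R C i \<xi> (v i) - v i))^2)" if "i < n" for i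
    using integrable_control_error[OF that lam] .
  then show "integrable M (\<lambda>\<xi>. mean_sq n (\<lambda>i. lam *\<^sub>R C i \<xi> (v i) - v i))"
    by (intro integrable_mult_right Bochner_Integration.integrable_sum) auto
  have "expectation (\<lambda>\<xi>. mean_sq n (\<lambda>i. lam *\<^sub>R C i \<xi> (v i) - v i))
      = (1 / real n) * (\<Sum>i<n. expectation (\<lambda>\<xi>. (norm (lam *\<^sub>R C i \<xi> (v i) - v i))^2))"
    using int by (simp add: Bochner_Integration.integral_sum)
  also have "\<dots> \<le> (1 / real n) * (\<Sum>i<n. ef_r eta om lam * (norm (v i))^2)"
    using expectation_control_error[OF _ lam] by (intro mult_left_mono sum_mono) auto
  finally show "expectation (\<lambda>\<xi>. mean_sq n (\<lambda>i. lam *\<^sub>R C i \<xi> (v i) - v i)) \<le> ef_r eta om lam * mean_sq n v"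
    by (simp add: sum_distrib_left)
qed

lemma
  assumes nu: "0 \<le> nu" "nu \<le> 1"
  shows integrable_mean_error:
      "integrable M (\<lambda>\<xi>. (norm (nu *\<^sub>R vmean n (\<lambda>i. C i \<xi> (v i)) - vmean n v))^2)"
    and expectation_mean_error:
      "expectation (\<lambda>\<xi>. (norm (nu *\<^sub>R vmean n (\<lambda>i. C i \<xi> (v i)) - vmean n v))^2)
        \<le> ef_r eta om_av nu * mean_sq n v"
proof -
  define m where "m i = expectation (\<lambda>\<xi>. C i \<xi> (v i))" for i
  define Y where "Y \<xi> = vmean n (\<lambda>i. C i \<xi> (v i))" for \<xi>
  have Y: "integrable M Y"
    unfolding Y_def by (intro integrable_scaleR_right Bochner_Integration.integrable_sum integrable_C) auto
  have EY: "expectation Y = vmean n m"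
    unfolding Y_def m_def using integrable_C by (simp add: Bochner_Integration.integral_sum)
  have Y_centred: "Y \<xi> - expectation Y = vmean n (\<lambda>i. C i \<xi> (v i) - m i)" for \<xi>
    by (simp add: Y_def EY sum_subtractf scaleR_diff_right)
  have var: "integrable M (\<lambda>\<xi>. (norm (Y \<xi> - expectation Y))^2)"
    unfolding Y_centred m_def by (rule integrable_variance_vmean)
  show "integrable M (\<lambda>\<xi>. (norm (nu *\<^sub>R vmean n (\<lambda>i. C i \<xi> (v i)) - vmean n v))^2)"
    using integrable_norm_scaleR_sub_sq[OF Y var] unfolding Y_def .
  have "(norm (nu *\<^sub>R expectation Y - vmean n v))^2 \<le> mean_sq n (\<lambda>i. nu *\<^sub>R m i - v i)"
    using norm_vmean_sq_le[OF n_pos, of "\<lambda>i. nu *\<^sub>R m i - v i"]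
    by (simp add: EY sum_subtractf scaleR_diff_right scaleR_sum_right)
  also have "\<dots> \<le> (1 - nu + nu * eta)^2 * mean_sq n v"
  proof -
    have "(norm (nu *\<^sub>R m i - v i))^2 \<le> (1 - nu + nu * eta)^2 * (norm (v i))^2" if "i < n" for i
      using norm_scaleR_sub_le[OF bias_C[OF that] nu] unfolding m_def
      by (metis norm_ge_zero power_mono power_mult_distrib)
    then have "(\<Sum>i<n. (norm (nu *\<^sub>R m i - v i))^2) \<le> (1 - nu + nu * eta)^2 * (\<Sum>i<n. (norm (v i))^2)"
      unfolding sum_distrib_left by (intro sum_mono) auto
    then show ?thesis
      by (simp add: divide_right_mono)
  qed
  finally have bias: "(norm (nu *\<^sub>R expectation Y - vmean n v))^2 \<le> (1 - nu + nu * eta)^2 * mean_sq n v" .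
  have var_bound: "nu^2 * expectation (\<lambda>\<xi>. (norm (Y \<xi> - expectation Y))^2) \<le> nu^2 * (om_av * mean_sq n v)"
    unfolding Y_centred m_def using variance_vmean_C by (intro mult_left_mono) auto
  have "expectation (\<lambda>\<xi>. (norm (nu *\<^sub>R Y \<xi> - vmean n v))^2)
      = (norm (nu *\<^sub>R expectation Y - vmean n v))^2 + nu^2 * expectation (\<lambda>\<xi>. (norm (Y \<xi> - expectation Y))^2)"
    by (rule expectation_norm_scaleR_sub_sq[OF Y var])
  also have "\<dots> \<le> (1 - nu + nu * eta)^2 * mean_sq n v + nu^2 * (om_av * mean_sq n v)"
    using bias var_bound by (rule add_mono)
  also have "\<dots> = ef_r eta om_av nu * mean_sq n v"
    by (simp add: ef_r_def algebra_simps)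
  finally show "expectation (\<lambda>\<xi>. (norm (nu *\<^sub>R vmean n (\<lambda>i. C i \<xi> (v i)) - vmean n v))^2)
      \<le> ef_r eta om_av nu * mean_sq n v"
    unfolding Y_def .
qed

end

section \<open>One step of EF-BV\<close>

text \<open>The potential of the paper is lyapunov F f_inf K gf n x h with K = gamma/(2 theta).\<close>

definition lyapunov ::
  "('a \<Rightarrow> real) \<Rightarrow> real \<Rightarrow> real \<Rightarrow> (nat \<Rightarrow> 'a \<Rightarrow> 'a::real_normed_vector) \<Rightarrow> nat \<Rightarrow> 'a \<Rightarrow> (nat \<Rightarrow> 'a) \<Rightarrow> real"
  where "lyapunov F Finf K gf n x hi = F x - Finf + K * mean_sq n (\<lambda>i. gf i x - hi i)"

lemma lyapunov_nonneg:
  assumes "Finf \<le> F x" and "0 \<le> K"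
  shows "0 \<le> lyapunov F Finf K gf n x hi"
  using assms by (simp add: lyapunov_def sum_nonneg)

lemma mean_sq_grad_control_gap_le:
  fixes gf :: "nat \<Rightarrow> 'a::real_inner \<Rightarrow> 'a"
  assumes lip: "\<And>i. i < n \<Longrightarrow> norm (gf i x' - gf i x) \<le> Lf i * norm (x' - x)" and s: "0 < s"
  shows "mean_sq n (\<lambda>i. gf i x' - (hi i + e i))
    \<le> (1 + 1/s) * ((1 / real n) * (\<Sum>i<n. (Lf i)^2)) * (norm (x' - x))^2
      + (1 + s) * mean_sq n (\<lambda>i. e i - (gf i x - hi i))"
proof -
  have "(norm (gf i x' - (hi i + e i)))^2
      \<le> (1 + 1/s) * ((Lf i)^2 * (norm (x' - x))^2) + (1 + s) * (norm (e i - (gf i x - hi i)))^2"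
    if i: "i < n" for i
  proof -
    have "gf i x' - (hi i + e i) = (gf i x' - gf i x) + ((gf i x - hi i) - e i)"
      by simp
    then have "(norm (gf i x' - (hi i + e i)))^2
        \<le> (1 + 1/s) * (norm (gf i x' - gf i x))^2 + (1 + s) * (norm (e i - (gf i x - hi i)))^2"
      using norm_add_sq_le_weighted[OF s] by (metis norm_minus_commute)
    moreover have "(norm (gf i x' - gf i x))^2 \<le> (Lf i)^2 * (norm (x' - x))^2"
      using lip[OF i] by (metis norm_ge_zero power_mono power_mult_distrib)
    then have "(1 + 1/s) * (norm (gf i x' - gf i x))^2 \<le> (1 + 1/s) * ((Lf i)^2 * (norm (x' - x))^2)"
      using s by (intro mult_left_mono) auto
    ultimately show ?thesis
      by linarith
  qed
  then have "(\<Sum>i<n. (norm (gf i x' - (hi i + e i)))^2)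
      \<le> (1 + 1/s) * (\<Sum>i<n. (Lf i)^2) * (norm (x' - x))^2 + (1 + s) * (\<Sum>i<n. (norm (e i - (gf i x - hi i)))^2)"
    unfolding sum_distrib_left sum_distrib_right sum.distrib[symmetric]
    by (intro sum_mono) (simp add: algebra_simps)
  then have "(1 / real n) * (\<Sum>i<n. (norm (gf i x' - (hi i + e i)))^2)
      \<le> (1 / real n) * ((1 + 1/s) * (\<Sum>i<n. (Lf i)^2) * (norm (x' - x))^2
        + (1 + s) * (\<Sum>i<n. (norm (e i - (gf i x - hi i)))^2))"
    by (rule mult_left_mono) simp
  moreover have "(1 / real n) * ((1 + 1/s) * (\<Sum>i<n. (Lf i)^2) * (norm (x' - x))^2
        + (1 + s) * (\<Sum>i<n. (norm (e i - (gf i x - hi i)))^2))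
      = (1 + 1/s) * ((1 / real n) * (\<Sum>i<n. (Lf i)^2)) * (norm (x' - x))^2
        + (1 + s) * mean_sq n (\<lambda>i. e i - (gf i x - hi i))"
    by (simp only: ring_distribs mult_ac)
  ultimately show ?thesis
    by linarith
qed

lemma lyapunov_update_le:
  fixes gf :: "nat \<Rightarrow> 'a::real_inner \<Rightarrow> 'a" and d :: "nat \<Rightarrow> 'a"
  assumes upper: "\<And>y. F y \<le> F x + gF x \<bullet> (y - x) + L/2 * (norm (y - x))^2"
    and gap: "gF x - h = vmean n (\<lambda>i. gf i x - hi i)"
    and lip: "\<And>i x y. i < n \<Longrightarrow> norm (gf i x - gf i y) \<le> Lf i * norm (x - y)"
    and K: "0 \<le> K" and s: "0 < s"
    and coef: "K * (1 + 1/s) * ((1 / real n) * (\<Sum>i<n. (Lf i)^2)) * gamma^2 \<le> gamma/2 * (1 - L * gamma)"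
  shows "lyapunov F Finf K gf n (x - gamma *\<^sub>R (h + nu *\<^sub>R vmean n d)) (\<lambda>i. hi i + lam *\<^sub>R d i)
    \<le> F x - Finf - gamma/2 * (norm (gF x))^2
      + gamma/2 * (norm (nu *\<^sub>R vmean n d - vmean n (\<lambda>i. gf i x - hi i)))^2
      + K * (1 + s) * mean_sq n (\<lambda>i. lam *\<^sub>R d i - (gf i x - hi i))"
proof -
  define g where "g = h + nu *\<^sub>R vmean n d"
  define L2 where "L2 = (1 / real n) * (\<Sum>i<n. (Lf i)^2)"
  have "g - gF x = nu *\<^sub>R vmean n d - vmean n (\<lambda>i. gf i x - hi i)"
    using gap by (simp add: g_def algebra_simps)
  then have "F (x - gamma *\<^sub>R g) \<le> F x - gamma/2 * (norm (gF x))^2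
      - gamma/2 * (1 - L * gamma) * (norm g)^2
      + gamma/2 * (norm (nu *\<^sub>R vmean n d - vmean n (\<lambda>i. gf i x - hi i)))^2"
    using gradient_step_upper_bound[where F = F and gF = gF and x = x and L = L, OF upper, of gamma g]
    by simp
  moreover have "K * mean_sq n (\<lambda>i. gf i (x - gamma *\<^sub>R g) - (hi i + lam *\<^sub>R d i))
      \<le> K * (1 + 1/s) * L2 * gamma^2 * (norm g)^2
        + K * (1 + s) * mean_sq n (\<lambda>i. lam *\<^sub>R d i - (gf i x - hi i))"
  proof -
    have "mean_sq n (\<lambda>i. gf i (x - gamma *\<^sub>R g) - (hi i + lam *\<^sub>R d i))
        \<le> (1 + 1/s) * L2 * (norm ((x - gamma *\<^sub>R g) - x))^2
          + (1 + s) * mean_sq n (\<lambda>i. lam *\<^sub>R d i - (gf i x - hi i))"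
      unfolding L2_def by (rule mean_sq_grad_control_gap_le[OF _ s]) (erule lip)
    then have "K * mean_sq n (\<lambda>i. gf i (x - gamma *\<^sub>R g) - (hi i + lam *\<^sub>R d i))
        \<le> K * ((1 + 1/s) * L2 * (norm ((x - gamma *\<^sub>R g) - x))^2
          + (1 + s) * mean_sq n (\<lambda>i. lam *\<^sub>R d i - (gf i x - hi i)))"
      using K by (rule mult_left_mono)
    moreover have "(norm ((x - gamma *\<^sub>R g) - x))^2 = gamma^2 * (norm g)^2"
      by (simp add: power_mult_distrib)
    ultimately show ?thesis
      by (simp only: ring_distribs mult_ac)
  qed
  moreover have "K * (1 + 1/s) * L2 * gamma^2 * (norm g)^2 \<le> gamma/2 * (1 - L * gamma) * (norm g)^2"
    using coef unfolding L2_def by (rule mult_right_mono) simp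
  ultimately show ?thesis
    unfolding lyapunov_def g_def[symmetric] by linarith
qed

lemma nn_integral_add_le_by_integrable_bound:
  fixes Q B :: "'a \<Rightarrow> real"
  assumes le: "\<And>\<xi>. Q \<xi> \<le> B \<xi>" and B: "\<And>\<xi>. 0 \<le> B \<xi>" "integrable M B"
    and c: "0 \<le> c" and total: "(\<integral>\<xi>. B \<xi> \<partial>M) + c \<le> d"
  shows "(\<integral>\<^sup>+\<xi>. ennreal (Q \<xi>) \<partial>M) + ennreal c \<le> ennreal d"
proof -
  have "(\<integral>\<^sup>+\<xi>. ennreal (Q \<xi>) \<partial>M) \<le> (\<integral>\<^sup>+\<xi>. ennreal (B \<xi>) \<partial>M)"
    using le by (intro nn_integral_mono ennreal_leI)
  also have "\<dots> = ennreal (\<integral>\<xi>. B \<xi> \<partial>M)"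
    using B by (intro nn_integral_eq_integral) auto
  finally have "(\<integral>\<^sup>+\<xi>. ennreal (Q \<xi>) \<partial>M) + ennreal c \<le> ennreal (\<integral>\<xi>. B \<xi> \<partial>M) + ennreal c"
    by (rule add_right_mono)
  also have "\<dots> = ennreal ((\<integral>\<xi>. B \<xi> \<partial>M) + c)"
    using B c by (intro ennreal_plus[symmetric] integral_nonneg) auto
  also have "\<dots> \<le> ennreal d"
    using total by (rule ennreal_leI)
  finally show ?thesis .
qed

context compression_round
begin

text \<open>The potential after a step is not known to be integrable, so its expectation is taken as a
  nonnegative integral.\<close>

lemma expected_lyapunov_step:
  fixes gf :: "nat \<Rightarrow> 'a \<Rightarrow> 'a"
  assumes upper: "\<And>y. F y \<le> F x + gF x \<bullet> (y - x) + L/2 * (norm (y - x))^2"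
    and grad_mean: "gF x = vmean n (\<lambda>i. gf i x)"
    and h_mean: "h = vmean n hi"
    and lip: "\<And>i x y. i < n \<Longrightarrow> norm (gf i x - gf i y) \<le> Lf i * norm (x - y)"
    and Finf: "\<And>z. Finf \<le> F z"
    and nu: "0 \<le> nu" "nu \<le> 1" and lam: "0 \<le> lam" "lam \<le> 1" and gamma: "0 \<le> gamma"
    and K: "0 \<le> K" and s: "0 < s"
    and coef_r: "K * (1 + s) * ef_r eta om lam + gamma/2 * ef_r eta om_av nu \<le> K"
    and coef_L: "K * (1 + 1/s) * ((1 / real n) * (\<Sum>i<n. (Lf i)^2)) * gamma^2 \<le> gamma/2 * (1 - L * gamma)"
  shows "(\<integral>\<^sup>+\<xi>. ennreal (lyapunov F Finf K gf n
            (x - gamma *\<^sub>R (h + nu *\<^sub>R vmean n (\<lambda>i. C i \<xi> (gf i x - hi i))))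
            (\<lambda>i. hi i + lam *\<^sub>R C i \<xi> (gf i x - hi i))) \<partial>M)
         + ennreal (gamma/2 * (norm (gF x))^2)
    \<le> ennreal (lyapunov F Finf K gf n x hi)"
proof -
  define v where "v i = gf i x - hi i" for i
  define G where "G = mean_sq n v"
  define mean_err where "mean_err \<xi> = (norm (nu *\<^sub>R vmean n (\<lambda>i. C i \<xi> (v i)) - vmean n v))^2" for \<xi>
  define ctrl_err where "ctrl_err \<xi> = mean_sq n (\<lambda>i. lam *\<^sub>R C i \<xi> (v i) - v i)" for \<xi>
  define B where "B \<xi> = F x - Finf - gamma/2 * (norm (gF x))^2 + gamma/2 * mean_err \<xi> + K * (1 + s) * ctrl_err \<xi>"
    for \<xi>
  have gap: "gF x - h = vmean n v"
    by (simp add: grad_mean h_mean v_def sum_subtractf scaleR_diff_right)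
  have pointwise: "lyapunov F Finf K gf n (x - gamma *\<^sub>R (h + nu *\<^sub>R vmean n (\<lambda>i. C i \<xi> (v i))))
      (\<lambda>i. hi i + lam *\<^sub>R C i \<xi> (v i)) \<le> B \<xi>" for \<xi>
    unfolding B_def mean_err_def ctrl_err_def v_def
    using lyapunov_update_le[where F = F and gF = gF and x = x and L = L and gf = gf and hi = hi,
        OF upper gap[unfolded v_def] lip K s coef_L] .
  have B_nonneg: "0 \<le> B \<xi>" for \<xi>
    using Finf K by (intro order_trans[OF lyapunov_nonneg pointwise])
  have ctrl: "integrable M ctrl_err" "expectation ctrl_err \<le> ef_r eta om lam * G"
    unfolding ctrl_err_def G_def
    using integrable_mean_sq_control_error[OF lam] expectation_mean_sq_control_error[OF lam] by auto
  have mean: "integrable M mean_err" "expectation mean_err \<le> ef_r eta om_av nu * G"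
    unfolding mean_err_def G_def using integrable_mean_error[OF nu] expectation_mean_error[OF nu] by auto
  have "expectation B = F x - Finf - gamma/2 * (norm (gF x))^2 + gamma/2 * expectation mean_err
      + K * (1 + s) * expectation ctrl_err"
    unfolding B_def using ctrl(1) mean(1) by (simp add: prob_space)
  also have "\<dots> \<le> F x - Finf - gamma/2 * (norm (gF x))^2 + gamma/2 * (ef_r eta om_av nu * G)
      + K * (1 + s) * (ef_r eta om lam * G)"
    using ctrl(2) mean(2) gamma K s by (intro add_mono mult_left_mono) auto
  also have "\<dots> \<le> F x - Finf - gamma/2 * (norm (gF x))^2 + K * G"
  proof -
    have "0 \<le> G"
      by (simp add: G_def sum_nonneg)
    from mult_right_mono[OF coef_r this]
    have "gamma/2 * (ef_r eta om_av nu * G) + K * (1 + s) * (ef_r eta om lam * G) \<le> K * G"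
      by (simp only: ring_distribs mult_ac)
    then show ?thesis
      by linarith
  qed
  also have "\<dots> = lyapunov F Finf K gf n x hi - gamma/2 * (norm (gF x))^2"
    by (simp add: lyapunov_def G_def v_def)
  finally have "expectation B + gamma/2 * (norm (gF x))^2 \<le> lyapunov F Finf K gf n x hi"
    by simp
  moreover have "integrable M B"
    unfolding B_def using ctrl(1) mean(1) by auto
  ultimately show ?thesis
    unfolding v_def[symmetric] using pointwise B_nonneg gamma
    by (intro nn_integral_add_le_by_integrable_bound) auto
qed

end

section \<open>Integration over the seed sequence\<close>

lemma nn_integral_PiM_split:
  assumes prob: "\<And>i. i \<in> I \<Longrightarrow> prob_space (P i)" and k: "k \<in> I"
    and f: "f \<in> borel_measurable (PiM I P)"
  shows "(\<integral>\<^sup>+w. f w \<partial>PiM I P) = (\<integral>\<^sup>+w. (\<integral>\<^sup>+z. f (w(k := z)) \<partial>P k) \<partial>PiM (I - {k}) P)"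
proof -
  let ?M = "P k \<Otimes>\<^sub>M PiM (I - {k}) P"
  have upd: "(\<lambda>(z, w). w(k := z)) \<in> measurable ?M (PiM I P)"
    using measurable_fun_upd[where J = "I - {k}" and I = I, OF _ measurable_snd measurable_fst] k
    by (auto simp: case_prod_beta')
  interpret P_k: prob_space "P k"
    using prob k by blast
  interpret P_rest: prob_space "PiM (I - {k}) P"
    using prob by (intro prob_space_PiM) auto
  interpret pair_sigma_finite "P k" "PiM (I - {k}) P" ..
  have "(\<integral>\<^sup>+w. f w \<partial>PiM I P) = (\<integral>\<^sup>+w. f w \<partial>distr ?M (PiM I P) (\<lambda>(z, w). w(k := z)))"
    using distr_pair_PiM_eq_PiM[of "I - {k}" P k] prob k by (simp add: insert_absorb)
  also have "\<dots> = (\<integral>\<^sup>+p. f (case p of (z, w) \<Rightarrow> w(k := z)) \<partial>?M)"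
    using f upd by (intro nn_integral_distr) auto
  also have "\<dots> = (\<integral>\<^sup>+w. (\<integral>\<^sup>+z. f (w(k := z)) \<partial>P k) \<partial>PiM (I - {k}) P)"
    using nn_integral_snd[of "\<lambda>(z, w). f (w(k := z))"] measurable_comp[OF upd f]
    by (simp add: case_prod_beta' o_def)
  finally show ?thesis .
qed

text \<open>The product-measure form of a conditional-expectation step: seed k is integrated out first.\<close>

lemma nn_integral_PiM_step:
  fixes Phi Phi' q :: "(nat \<Rightarrow> 'w) \<Rightarrow> ennreal"
  assumes prob: "\<And>t. prob_space (P t)"
    and meas: "Phi \<in> borel_measurable (PiM UNIV P)" "Phi' \<in> borel_measurable (PiM UNIV P)"
      "q \<in> borel_measurable (PiM UNIV P)"
    and indep: "\<And>w z. Phi (w(k := z)) = Phi w" "\<And>w z. q (w(k := z)) = q w"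
    and step: "\<And>w. (\<integral>\<^sup>+z. Phi' (w(k := z)) \<partial>P k) + q w \<le> Phi w"
  shows "(\<integral>\<^sup>+w. Phi' w \<partial>PiM UNIV P) + (\<integral>\<^sup>+w. q w \<partial>PiM UNIV P) \<le> (\<integral>\<^sup>+w. Phi w \<partial>PiM UNIV P)"
proof -
  interpret P_k: prob_space "P k"
    using prob by blast
  have lift: "(\<integral>\<^sup>+w. g w \<partial>PiM UNIV P) = (\<integral>\<^sup>+w. (\<integral>\<^sup>+z. g (w(k := z)) \<partial>P k) \<partial>PiM (UNIV - {k}) P)"
    if "g \<in> borel_measurable (PiM UNIV P)" for g :: "(nat \<Rightarrow> 'w) \<Rightarrow> ennreal"
    using prob that by (intro nn_integral_PiM_split) auto
  have upd: "(\<lambda>z. w(k := z)) \<in> measurable (P k) (PiM UNIV P)" if "w \<in> space (PiM (UNIV - {k}) P)" for w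
  proof -
    have "(\<lambda>z. ((\<lambda>_. w) z)(k := z)) \<in> measurable (P k) (PiM UNIV P)"
      by (rule measurable_fun_upd[where J = "UNIV - {k}"]) (use that in auto)
    then show ?thesis
      by simp
  qed
  have "(\<integral>\<^sup>+w. Phi' w \<partial>PiM UNIV P) + (\<integral>\<^sup>+w. q w \<partial>PiM UNIV P) = (\<integral>\<^sup>+w. Phi' w + q w \<partial>PiM UNIV P)"
    using meas by (intro nn_integral_add[symmetric]) auto
  also have "\<dots> = (\<integral>\<^sup>+w. (\<integral>\<^sup>+z. Phi' (w(k := z)) + q (w(k := z)) \<partial>P k) \<partial>PiM (UNIV - {k}) P)"
    using meas by (intro lift) auto
  also have "\<dots> = (\<integral>\<^sup>+w. (\<integral>\<^sup>+z. Phi' (w(k := z)) \<partial>P k) + q w \<partial>PiM (UNIV - {k}) P)"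
    using meas upd by (intro nn_integral_cong) (simp add: indep nn_integral_add P_k.emeasure_space_1)
  also have "\<dots> \<le> (\<integral>\<^sup>+w. Phi w \<partial>PiM (UNIV - {k}) P)"
    using step by (intro nn_integral_mono)
  also have "\<dots> = (\<integral>\<^sup>+w. Phi w \<partial>PiM UNIV P)"
    using lift[OF meas(1)] by (simp add: indep P_k.emeasure_space_1)
  finally show ?thesis .
qed

lemma nn_integral_PiM_telescope:
  fixes Phi q :: "nat \<Rightarrow> (nat \<Rightarrow> 'w) \<Rightarrow> ennreal"
  assumes prob: "\<And>t. prob_space (P t)"
    and meas: "\<And>k. Phi k \<in> borel_measurable (PiM UNIV P)" "\<And>k. q k \<in> borel_measurable (PiM UNIV P)"
    and indep: "\<And>k w z. Phi k (w(k := z)) = Phi k w" "\<And>k w z. q k (w(k := z)) = q k w"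
    and step: "\<And>k w. (\<integral>\<^sup>+z. Phi (Suc k) (w(k := z)) \<partial>P k) + q k w \<le> Phi k w"
  shows "(\<integral>\<^sup>+w. Phi T w \<partial>PiM UNIV P) + (\<Sum>k<T. \<integral>\<^sup>+w. q k w \<partial>PiM UNIV P) \<le> (\<integral>\<^sup>+w. Phi 0 w \<partial>PiM UNIV P)"
proof (induction T)
  case (Suc T)
  have "(\<integral>\<^sup>+w. Phi (Suc T) w \<partial>PiM UNIV P) + (\<integral>\<^sup>+w. q T w \<partial>PiM UNIV P) \<le> (\<integral>\<^sup>+w. Phi T w \<partial>PiM UNIV P)"
    using prob meas(1)[of T] meas(1)[of "Suc T"] meas(2)[of T] indep(1)[of T] indep(2)[of T] step[of T]
    by (rule nn_integral_PiM_step)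
  then have "(\<integral>\<^sup>+w. Phi (Suc T) w \<partial>PiM UNIV P) + (\<Sum>k<Suc T. \<integral>\<^sup>+w. q k w \<partial>PiM UNIV P)
      \<le> (\<integral>\<^sup>+w. Phi T w \<partial>PiM UNIV P) + (\<Sum>k<T. \<integral>\<^sup>+w. q k w \<partial>PiM UNIV P)"
    by (simp add: add.assoc[symmetric] add_right_mono)
  with Suc.IH show ?case
    by (rule order_trans[rotated])
qed simp

lemma integral_uniform_index_le:
  fixes g :: "nat \<Rightarrow> 'a \<Rightarrow> real"
  assumes t: "t \<ge> 1" and g: "\<And>k. g k \<in> borel_measurable M" and c: "0 \<le> c"
    and sum_le: "(\<Sum>k<t. \<integral>\<^sup>+w. ennreal (g k w) \<partial>M) \<le> ennreal (real t * c)"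
  shows "(\<integral>(w, k). g k w \<partial>(M \<Otimes>\<^sub>M measure_pmf (pmf_of_set {..<t}))) \<le> c"
proof (rule integral_real_bounded[OF c])
  let ?U = "measure_pmf (pmf_of_set {..<t})"
  have meas: "(\<lambda>p. ennreal (g (snd p) (fst p))) \<in> borel_measurable (M \<Otimes>\<^sub>M ?U)"
  proof (rule measurable_compose_countable'[where g = snd and I = UNIV])
    show "snd \<in> measurable (M \<Otimes>\<^sub>M ?U) (count_space UNIV)"
      using measurable_snd[of M ?U] by (simp add: measurable_cong_sets[OF refl sets_measure_pmf_count_space])
  qed (use g in auto)
  have "(\<integral>\<^sup>+p. ennreal (case p of (w, k) \<Rightarrow> g k w) \<partial>(M \<Otimes>\<^sub>M ?U))
      = (\<integral>\<^sup>+w. (\<integral>\<^sup>+k. ennreal (g k w) \<partial>?U) \<partial>M)"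
    using measure_pmf.nn_integral_fst[OF meas] by (simp add: case_prod_beta')
  also have "\<dots> = (\<integral>\<^sup>+w. (\<Sum>k<t. ennreal (g k w)) \<partial>M) / of_nat t"
    using t g by (subst nn_integral_pmf_of_set) (auto simp: lessThan_empty_iff intro!: nn_integral_divide)
  also have "\<dots> = (\<Sum>k<t. \<integral>\<^sup>+w. ennreal (g k w) \<partial>M) / of_nat t"
    using g by (subst nn_integral_sum) auto
  also have "\<dots> \<le> ennreal (real t * c) / of_nat t"
    using sum_le by (rule divide_right_mono_ennreal)
  also have "\<dots> = ennreal c"
    using t c by (simp add: ennreal_of_nat_eq_real_of_nat divide_ennreal ennreal_mult[symmetric])
  finally show "(\<integral>\<^sup>+p. ennreal (case p of (w, k) \<Rightarrow> g k w) \<partial>(M \<Otimes>\<^sub>M ?U)) \<le> ennreal c" .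
qed

lemma efbv_state_Suc:
  "efbv_state C gf n gamma lam nu x0 h0 w (Suc k) =
    (let (x, hi, h) = efbv_state C gf n gamma lam nu x0 h0 w k;
         d = (\<lambda>i. C i k (w k) (gf i x - hi i))
     in (x - gamma *\<^sub>R (h + nu *\<^sub>R vmean n d), (\<lambda>i. hi i + lam *\<^sub>R d i), h + lam *\<^sub>R vmean n d))"
  by (simp add: Let_def case_prod_beta')

lemma efbv_state_cong:
  assumes "\<And>j. j < k \<Longrightarrow> w j = w' j"
  shows "efbv_state C gf n gamma lam nu x0 h0 w k = efbv_state C gf n gamma lam nu x0 h0 w' k"
  using assms by (induction k) (simp_all only: efbv_state_Suc less_Suc_eq, auto)

lemma efbv_state_h_vmean:
  "snd (snd (efbv_state C gf n gamma lam nu x0 h0 w k)) = vmean n (fst (snd (efbv_state C gf n gamma lam nu x0 h0 w k)))"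
  by (induction k) (auto simp: Let_def case_prod_beta' sum.distrib scaleR_add_right scaleR_sum_right)

lemma efbv_state_measurable:
  assumes C: "\<And>i t. i < n \<Longrightarrow> (\<lambda>(\<xi>, x). C i t \<xi> x) \<in> borel_measurable (P t \<Otimes>\<^sub>M borel)"
    and gf: "\<And>i. i < n \<Longrightarrow> gf i \<in> borel_measurable borel"
  shows "(\<lambda>w. fst (efbv_state C gf n gamma lam nu x0 h0 w k)) \<in> borel_measurable (PiM UNIV P)"
    and "i < n \<Longrightarrow> (\<lambda>w. fst (snd (efbv_state C gf n gamma lam nu x0 h0 w k)) i) \<in> borel_measurable (PiM UNIV P)"
proof -
  have "(\<lambda>w. fst (efbv_state C gf n gamma lam nu x0 h0 w k)) \<in> borel_measurable (PiM UNIV P) \<and>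
    (\<forall>i<n. (\<lambda>w. fst (snd (efbv_state C gf n gamma lam nu x0 h0 w k)) i) \<in> borel_measurable (PiM UNIV P))"
  proof (induction k)
    case (Suc k)
    define X where "X w = fst (efbv_state C gf n gamma lam nu x0 h0 w k)" for w
    define H where "H w = fst (snd (efbv_state C gf n gamma lam nu x0 h0 w k))" for w
    have X: "X \<in> borel_measurable (PiM UNIV P)" and H: "\<And>i. i < n \<Longrightarrow> (\<lambda>w. H w i) \<in> borel_measurable (PiM UNIV P)"
      using Suc by (auto simp: X_def[abs_def] H_def)
    have d: "(\<lambda>w. C i k (w k) (gf i (X w) - H w i)) \<in> borel_measurable (PiM UNIV P)" if i: "i < n" for i
    proof -
      have "(\<lambda>w. (w k, gf i (X w) - H w i)) \<in> measurable (PiM UNIV P) (P k \<Otimes>\<^sub>M borel)"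
        using X H[OF i] measurable_compose[OF X gf[OF i]] by (intro measurable_Pair) auto
      from measurable_compose[OF this C[OF i]] show ?thesis
        by simp
    qed
    have "(\<lambda>w. vmean n (\<lambda>i. C i k (w k) (gf i (X w) - H w i))) \<in> borel_measurable (PiM UNIV P)"
      using d by auto
    moreover have "(\<lambda>w. vmean n (H w)) \<in> borel_measurable (PiM UNIV P)"
      using H by auto
    ultimately show ?case
      using X H d
      by (simp add: efbv_state_Suc Let_def case_prod_beta' efbv_state_h_vmean flip: X_def H_def)
  qed simp
  then show "(\<lambda>w. fst (efbv_state C gf n gamma lam nu x0 h0 w k)) \<in> borel_measurable (PiM UNIV P)"
    and "i < n \<Longrightarrow> (\<lambda>w. fst (snd (efbv_state C gf n gamma lam nu x0 h0 w k)) i) \<in> borel_measurable (PiM UNIV P)"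
    by auto
qed

locale efbv_run =
  fixes gf :: "nat \<Rightarrow> real^'d \<Rightarrow> real^'d" and F :: "real^'d \<Rightarrow> real" and gF :: "real^'d \<Rightarrow> real^'d"
    and Lf :: "nat \<Rightarrow> real" and L :: real and n :: nat
    and P :: "nat \<Rightarrow> 'w measure" and C :: "nat \<Rightarrow> nat \<Rightarrow> 'w \<Rightarrow> real^'d \<Rightarrow> real^'d"
    and eta om om_av gamma lam nu :: real and x0 :: "real^'d" and h0 :: "nat \<Rightarrow> real^'d"
  assumes round: "\<And>t. compression_round (P t) n (\<lambda>i. C i t) eta om om_av"
    and C_measurable: "\<And>i t. i < n \<Longrightarrow> (\<lambda>(\<xi>, x). C i t \<xi> x) \<in> borel_measurable (P t \<Otimes>\<^sub>M borel)"
    and grad_vmean: "\<And>x. gF x = vmean n (\<lambda>i. gf i x)"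
    and Lf_nonneg: "\<And>i. i < n \<Longrightarrow> 0 \<le> Lf i"
    and lip_gf: "\<And>i x y. i < n \<Longrightarrow> norm (gf i x - gf i y) \<le> Lf i * norm (x - y)"
    and grad_F: "\<And>x. GDERIV F x :> gF x"
    and L_nonneg: "0 \<le> L"
    and lip_gF: "\<And>x y. norm (gF x - gF y) \<le> L * norm (x - y)"
    and F_bdd: "bdd_below (range F)"
    and nu: "0 < nu" "nu \<le> 1" and lam: "0 < lam" "lam \<le> 1"
    and r: "0 < ef_r eta om lam" "ef_r eta om lam < 1" and r_av: "0 < ef_r eta om_av nu"
    and gamma: "0 < gamma"
    and gamma_le: "gamma \<le> 1 / (L + sqrt ((1 / real n) * (\<Sum>i<n. (Lf i)^2))
      * sqrt (ef_r eta om_av nu / ef_r eta om lam) * (1 / ef_s (ef_r eta om lam)))"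
begin

abbreviation "weight \<equiv> gamma / (2 * ef_theta (ef_r eta om lam) (ef_r eta om_av nu))"

abbreviation "state w k \<equiv> efbv_state C gf n gamma lam nu x0 h0 w k"

abbreviation "potential k w \<equiv> lyapunov F (INF x. F x) weight gf n (fst (state w k)) (fst (snd (state w k)))"

lemma prob_space_P: "prob_space (P t)"
  using round compression_round.axioms(1) by blast

lemma state_upd_current: "state (w(k := z)) k = state w k"
  by (rule efbv_state_cong) simp

lemma F_ge_Inf: "(INF x. F x) \<le> F z"
  using F_bdd by (intro cINF_lower) auto

lemma gf_measurable:
  assumes "i < n"
  shows "gf i \<in> borel_measurable borel"
proof (rule borel_measurable_continuous_onI)
  have "lipschitz_on (Lf i) UNIV (gf i)"
    using Lf_nonneg lip_gf assms by (auto simp: lipschitz_on_def dist_norm)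
  then show "continuous_on UNIV (gf i)"
    by (rule lipschitz_on_continuous_on)
qed

lemma state_measurable:
  "(\<lambda>w. fst (state w k)) \<in> borel_measurable (PiM UNIV P)"
  "i < n \<Longrightarrow> (\<lambda>w. fst (snd (state w k)) i) \<in> borel_measurable (PiM UNIV P)"
  using efbv_state_measurable[where C = C and gf = gf and n = n and P = P, OF C_measurable gf_measurable]
  by blast+

lemma grad_measurable: "(\<lambda>w. gF (fst (state w k))) \<in> borel_measurable (PiM UNIV P)"
proof (rule measurable_compose[OF state_measurable(1) borel_measurable_continuous_onI])
  have "lipschitz_on L UNIV gF"
    using L_nonneg lip_gF by (auto simp: lipschitz_on_def dist_norm)
  then show "continuous_on UNIV gF"
    by (rule lipschitz_on_continuous_on)
qed

lemma potential_measurable: "potential k \<in> borel_measurable (PiM UNIV P)"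
proof -
  have "F \<in> borel_measurable borel"
    using grad_F unfolding gderiv_def
    by (intro borel_measurable_continuous_onI continuous_at_imp_continuous_on ballI)
      (meson has_derivative_continuous)
  then show ?thesis
    unfolding lyapunov_def using state_measurable gf_measurable by measurable
qed

lemma mean_sq_Lf_nonneg: "0 \<le> (1 / real n) * (\<Sum>i<n. (Lf i)^2)"
  by (simp add: sum_nonneg)

lemmas stepsize = efbv_stepsize_conditions[OF r r_av gamma L_nonneg mean_sq_Lf_nonneg gamma_le]

lemma potential_step:
  "(\<integral>\<^sup>+z. ennreal (potential (Suc k) (w(k := z))) \<partial>P k) + ennreal (gamma/2 * (norm (gF (fst (state w k))))^2)
    \<le> ennreal (potential k w)"
proof -
  interpret compression_round "P k" n "\<lambda>i. C i k" eta om om_av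
    by (rule round)
  define x where "x = fst (state w k)"
  define hi where "hi = fst (snd (state w k))"
  define h where "h = snd (snd (state w k))"
  have "potential (Suc k) (w(k := z)) = lyapunov F (INF x. F x) weight gf n
      (x - gamma *\<^sub>R (h + nu *\<^sub>R vmean n (\<lambda>i. C i k z (gf i x - hi i))))
      (\<lambda>i. hi i + lam *\<^sub>R C i k z (gf i x - hi i))" for z
    by (simp add: efbv_state_Suc Let_def case_prod_beta' state_upd_current x_def hi_def h_def)
  moreover have "(\<integral>\<^sup>+z. ennreal (lyapunov F (INF x. F x) weight gf n
        (x - gamma *\<^sub>R (h + nu *\<^sub>R vmean n (\<lambda>i. C i k z (gf i x - hi i))))
        (\<lambda>i. hi i + lam *\<^sub>R C i k z (gf i x - hi i))) \<partial>P k)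
      + ennreal (gamma/2 * (norm (gF x))^2) \<le> ennreal (lyapunov F (INF x. F x) weight gf n x hi)"
  proof (rule expected_lyapunov_step[where s = "ef_s (ef_r eta om lam)"])
    show "F y \<le> F x + gF x \<bullet> (y - x) + L / 2 * (norm (y - x))^2" for y
      using grad_F lip_gF by (rule lipschitz_gradient_upper_bound)
    show "h = vmean n hi"
      unfolding h_def hi_def by (rule efbv_state_h_vmean)
  qed (use grad_vmean lip_gf F_ge_Inf nu lam gamma stepsize in auto)
  ultimately show ?thesis
    by (simp add: x_def hi_def)
qed

lemma potential_telescope:
  "(\<integral>\<^sup>+w. ennreal (potential t w) \<partial>PiM UNIV P)
    + (\<Sum>k<t. \<integral>\<^sup>+w. ennreal (gamma/2) * ennreal ((norm (gF (fst (state w k))))^2) \<partial>PiM UNIV P)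
    \<le> ennreal (lyapunov F (INF x. F x) weight gf n x0 h0)"
proof -
  have "(\<integral>\<^sup>+w. ennreal (potential 0 w) \<partial>PiM UNIV P) = ennreal (lyapunov F (INF x. F x) weight gf n x0 h0)"
    using prob_space_P by (simp add: prob_space.emeasure_space_1 prob_space_PiM)
  moreover have "(\<integral>\<^sup>+w. ennreal (potential t w) \<partial>PiM UNIV P)
      + (\<Sum>k<t. \<integral>\<^sup>+w. ennreal (gamma/2) * ennreal ((norm (gF (fst (state w k))))^2) \<partial>PiM UNIV P)
      \<le> (\<integral>\<^sup>+w. ennreal (potential 0 w) \<partial>PiM UNIV P)"
  proof (rule nn_integral_PiM_telescope[where Phi = "\<lambda>k w. ennreal (potential k w)"
        and q = "\<lambda>k w. ennreal (gamma/2) * ennreal ((norm (gF (fst (state w k))))^2)"])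
    show "(\<lambda>w. ennreal (potential k w)) \<in> borel_measurable (PiM UNIV P)" for k
      by (rule measurable_compose[OF potential_measurable measurable_ennreal])
    show "(\<lambda>w. ennreal (gamma/2) * ennreal ((norm (gF (fst (state w k))))^2)) \<in> borel_measurable (PiM UNIV P)"
      for k
      using grad_measurable by measurable
    show "(\<integral>\<^sup>+z. ennreal (potential (Suc k) (w(k := z))) \<partial>P k)
        + ennreal (gamma/2) * ennreal ((norm (gF (fst (state w k))))^2) \<le> ennreal (potential k w)" for k w
    proof -
      have "ennreal (gamma/2) * ennreal ((norm (gF (fst (state w k))))^2)
          = ennreal (gamma/2 * (norm (gF (fst (state w k))))^2)"
        using gamma by (intro ennreal_mult[symmetric]) auto
      then show ?thesis
        using potential_step[of k w] by (simp only:)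
    qed
  qed (simp_all only: prob_space_P state_upd_current)
  ultimately show ?thesis
    by simp
qed

lemma sum_expected_sq_grad_le:
  "(\<Sum>k<t. \<integral>\<^sup>+w. ennreal ((norm (gF (fst (state w k))))^2) \<partial>PiM UNIV P)
    \<le> ennreal (2 / gamma * lyapunov F (INF x. F x) weight gf n x0 h0)"
    (is "?S \<le> _")
proof -
  have "ennreal (gamma/2) * ?S
      \<le> (\<integral>\<^sup>+w. ennreal (potential t w) \<partial>PiM UNIV P) + ennreal (gamma/2) * ?S"
    by (rule add_increasing) simp_all
  also have "\<dots> \<le> ennreal (lyapunov F (INF x. F x) weight gf n x0 h0)"
    using potential_telescope grad_measurable by (simp add: sum_distrib_left nn_integral_cmult)
  finally have bound: "ennreal (gamma/2) * ?S \<le> ennreal (lyapunov F (INF x. F x) weight gf n x0 h0)" .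
  have "?S = ennreal (2 / gamma) * (ennreal (gamma/2) * ?S)"
    using gamma by (simp add: mult.assoc[symmetric] ennreal_mult[symmetric])
  also have "\<dots> \<le> ennreal (2 / gamma) * ennreal (lyapunov F (INF x. F x) weight gf n x0 h0)"
    using bound by (rule mult_left_mono) simp
  also have "\<dots> = ennreal (2 / gamma * lyapunov F (INF x. F x) weight gf n x0 h0)"
    using gamma F_ge_Inf stepsize(2) by (intro ennreal_mult[symmetric] lyapunov_nonneg) auto
  finally show ?thesis .
qed

lemma expected_sq_grad_random_iterate_le:
  assumes t: "t \<ge> 1"
  shows "(\<integral>(w, k). (norm (gF (fst (state w k))))^2 \<partial>(PiM UNIV P \<Otimes>\<^sub>M measure_pmf (pmf_of_set {..<t})))
    \<le> 2 * (F x0 - (INF x. F x)) / (gamma * real t)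
      + mean_sq n (\<lambda>i. gf i x0 - h0 i) / (ef_theta (ef_r eta om lam) (ef_r eta om_av nu) * real t)"
    (is "_ \<le> ?bound")
proof (rule integral_uniform_index_le[OF t])
  define theta where "theta = ef_theta (ef_r eta om lam) (ef_r eta om_av nu)"
  have theta: "0 < theta"
    using stepsize(2) gamma by (simp add: theta_def zero_less_divide_iff)
  show "0 \<le> ?bound"
    using F_ge_Inf[of x0] theta gamma by (simp add: theta_def[symmetric] sum_nonneg)
  have "2 / gamma * lyapunov F (INF x. F x) weight gf n x0 h0 = real t * ?bound"
    using t gamma theta by (simp add: lyapunov_def theta_def[symmetric] field_simps)
  then show "(\<Sum>k<t. \<integral>\<^sup>+w. ennreal ((norm (gF (fst (state w k))))^2) \<partial>PiM UNIV P) \<le> ennreal (real t * ?bound)"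
    using sum_expected_sq_grad_le[of t] by simp
qed (use grad_measurable in measurable)

end

theorem theorem3:
  fixes f :: "nat \<Rightarrow> real^'d \<Rightarrow> real" and gf :: "nat \<Rightarrow> real^'d \<Rightarrow> real^'d"
    and F :: "real^'d \<Rightarrow> real" and gF :: "real^'d \<Rightarrow> real^'d"
    and Lf :: "nat \<Rightarrow> real" and L :: real and n :: nat
    and P :: "nat \<Rightarrow> 'w measure" and C :: "nat \<Rightarrow> nat \<Rightarrow> 'w \<Rightarrow> real^'d \<Rightarrow> real^'d"
    and eta om om_av gamma lam nu :: real
    and x0 :: "real^'d" and h0 :: "nat \<Rightarrow> real^'d" and t :: nat
  assumes n_pos: "n \<ge> 1"
    and grad_i: "\<forall>i<n. \<forall>x. GDERIV (f i) x :> gf i x"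
    and Lf_nonneg: "\<forall>i<n. 0 \<le> Lf i"
    and lip_i: "\<forall>i<n. \<forall>x y. norm (gf i x - gf i y) \<le> Lf i * norm (x - y)"
    and F_def: "F = (\<lambda>x. (1 / real n) * (\<Sum>i<n. f i x))"
    and grad_F: "\<forall>x. GDERIV F x :> gF x"
    and L_nonneg: "0 \<le> L"
    and lip_F: "\<forall>x y. norm (gF x - gF y) \<le> L * norm (x - y)"
    and L_le: "L \<le> sqrt ((1 / real n) * (\<Sum>i<n. (Lf i)^2))"
    and F_bdd: "bdd_below (range F)"
    and prob: "\<forall>t. prob_space (P t)"
    and C_meas: "\<forall>i<n. \<forall>t. (\<lambda>(\<xi>, x). C i t \<xi> x) \<in> borel_measurable (P t \<Otimes>\<^sub>M borel)"
    and C_int: "\<forall>i<n. \<forall>t x. integrable (P t) (\<lambda>\<xi>. C i t \<xi> x)"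
    and C_bias: "\<forall>i<n. \<forall>t x. norm ((\<integral>\<xi>. C i t \<xi> x \<partial>P t) - x) \<le> eta * norm x"
    and C_var_int: "\<forall>i<n. \<forall>t x. integrable (P t)
          (\<lambda>\<xi>. (norm (C i t \<xi> x - (\<integral>\<xi>'. C i t \<xi>' x \<partial>P t)))^2)"
    and C_var: "\<forall>i<n. \<forall>t x.
          (\<integral>\<xi>. (norm (C i t \<xi> x - (\<integral>\<xi>'. C i t \<xi>' x \<partial>P t)))^2 \<partial>P t) \<le> om * (norm x)^2"
    and eta_ge: "0 \<le> eta" and eta_lt: "eta < 1"
    and om_ge: "0 \<le> om" and om_av_ge: "0 \<le> om_av" and om_av_le: "om_av \<le> om"
    and C_av: "\<forall>t (xs :: nat \<Rightarrow> real^'d).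
          (\<integral>\<xi>. (norm ((1 / real n) *\<^sub>R (\<Sum>i<n. C i t \<xi> (xs i) - (\<integral>\<xi>'. C i t \<xi>' (xs i) \<partial>P t))))^2 \<partial>P t)
            \<le> om_av / real n * (\<Sum>i<n. (norm (xs i))^2)"
    and nu_pos: "0 < nu" and nu_le: "nu \<le> 1"
    and lam_pos: "0 < lam" and lam_le: "lam \<le> 1"
    and r_pos: "0 < ef_r eta om lam" and r_av_pos: "0 < ef_r eta om_av nu"
    and r_lt: "ef_r eta om lam < 1"
    and gamma_pos: "0 < gamma"
    and gamma_le: "gamma \<le> 1 / (L + sqrt ((1 / real n) * (\<Sum>i<n. (Lf i)^2))
                      * sqrt (ef_r eta om_av nu / ef_r eta om lam) * (1 / ef_s (ef_r eta om lam)))"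
    and t_pos: "t \<ge> 1"
  shows "(\<integral>(w, k). (norm (gF (efbv_x C gf n gamma lam nu x0 h0 w k)))^2
            \<partial>(PiM UNIV P \<Otimes>\<^sub>M measure_pmf (pmf_of_set {..<t})))
         \<le> 2 * (F x0 - (INF x. F x)) / (gamma * real t)
           + ((1 / real n) * (\<Sum>i<n. (norm (gf i x0 - h0 i))^2))
             / (ef_theta (ef_r eta om lam) (ef_r eta om_av nu) * real t)"
proof -
  have round: "compression_round (P s) n (\<lambda>i. C i s) eta om om_av" for s
  proof (intro compression_round.intro compression_round_axioms.intro)
    show "(\<integral>\<xi>. (norm (vmean n (\<lambda>i. C i s \<xi> (xs i) - (\<integral>\<xi>'. C i s \<xi>' (xs i) \<partial>P s))))^2 \<partial>P s)
        \<le> om_av * mean_sq n xs" for xs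
      using C_av by simp
  qed (use prob n_pos C_int C_bias C_var_int C_var in auto)
  interpret efbv_run gf F gF Lf L n P C eta om om_av gamma lam nu x0 h0
  proof (intro efbv_run.intro)
    show "gF x = vmean n (\<lambda>i. gf i x)" for x
      using grad_i F_def grad_F by (intro gderiv_mean) auto
  qed (use round C_meas Lf_nonneg lip_i grad_F L_nonneg lip_F F_bdd nu_pos nu_le lam_pos lam_le
      r_pos r_lt r_av_pos gamma_pos gamma_le in auto)
  show ?thesis
    using expected_sq_grad_random_iterate_le[OF t_pos] by (simp add: efbv_x_def)
qed

end
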